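(* There exists a unique $k[[x]]$-algebra homomorphism $$\varphi: k[[y_0,y_1,y_2]]/(y_1^2-y_0y_2)\longrightarrow k[[x_0,x_1]]$$ which is grading preserving (i.e. $\varphi(y_p)$ is homogeneous of degree $p$ for $p=0,1,2$) and Poisson. It is given by $$y_0\mapsto x_0,\qquad y_1\mapsto -x_0x_1,\qquad y_2\mapsto x_0x_1^2.$$
   Context: $k$ is a field of characteristic zero. $A=k[[y_0,y_1,y_2]]/(y_1^2-y_0y_2)$ is the inverse limit $\varprojlim_n\mathcal P(\mathcal O_n)$ of the graded Poisson algebras of principal symbols of differential operators on $\mathcal O_n=k[x]/(x^{n+1})$; it is graded by $\deg y_p=p$ with Poisson bracket determined by $\{y_0,y_1\}=y_0$, $\{y_0,y_2\}=2y_1$, $\{y_1,y_2\}=y_2$. $B=k[[x_0,x_1]]$ is the completion at $(x_0,x_1)$ of the algebra $k[x_0,x_1]$ of principal symbols of differential operators on $k[x]$ ($x_0$ the symbol of $x$, $x_1$ the symbol of $\frac d{dx}$), graded by $\deg x_0=0$, $\deg x_1=1$ (degree in $x_1$), with Poisson bracket determined by $\{x_0,x_1\}=-1$. Both are $k[[x]]$-algebras via $x\mapsto y_0$ and $x\mapsto x_0$ respectively. "Poisson" means $\varphi$ preserves the brackets. *)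

theory Defs
  imports "HOL-Algebra.QuotRing" "HOL-Computational_Algebra.Formal_Power_Series"
begin

text \<open>An element of k[[x0,x1]] is its coefficient function nat*nat => k,
  (i,j) being the exponent of x0^i x1^j.\<close>

type_synonym 'k ps2 = "nat \<times> nat \<Rightarrow> 'k"
type_synonym 'k ps3 = "nat \<times> nat \<times> nat \<Rightarrow> 'k"

definition ps2_mult :: "'k::comm_ring_1 ps2 \<Rightarrow> 'k ps2 \<Rightarrow> 'k ps2" where
  "ps2_mult f g = (\<lambda>(i,j). \<Sum>a\<le>i. \<Sum>b\<le>j. f (a,b) * g (i-a, j-b))"

definition ps3_mult :: "'k::comm_ring_1 ps3 \<Rightarrow> 'k ps3 \<Rightarrow> 'k ps3" where
  "ps3_mult f g = (\<lambda>(i,j,l). \<Sum>a\<le>i. \<Sum>b\<le>j. \<Sum>c\<le>l. f (a,b,c) * g (i-a, j-b, l-c))"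

definition PS2 :: "('k::comm_ring_1 ps2) ring" where
  "PS2 = \<lparr>carrier = UNIV, monoid.mult = ps2_mult, one = (\<lambda>m. if m = (0,0) then 1 else 0),
          zero = (\<lambda>_. 0), add = (\<lambda>f g m. f m + g m)\<rparr>"

definition PS3 :: "('k::comm_ring_1 ps3) ring" where
  "PS3 = \<lparr>carrier = UNIV, monoid.mult = ps3_mult, one = (\<lambda>m. if m = (0,0,0) then 1 else 0),
          zero = (\<lambda>_. 0), add = (\<lambda>f g m. f m + g m)\<rparr>"

definition x0 :: "'k::comm_ring_1 ps2" where "x0 = (\<lambda>m. if m = (1,0) then 1 else 0)"
definition x1 :: "'k::comm_ring_1 ps2" where "x1 = (\<lambda>m. if m = (0,1) then 1 else 0)"
definition y0 :: "'k::comm_ring_1 ps3" where "y0 = (\<lambda>m. if m = (1,0,0) then 1 else 0)"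
definition y1 :: "'k::comm_ring_1 ps3" where "y1 = (\<lambda>m. if m = (0,1,0) then 1 else 0)"
definition y2 :: "'k::comm_ring_1 ps3" where "y2 = (\<lambda>m. if m = (0,0,1) then 1 else 0)"

definition d2_0 :: "'k::comm_ring_1 ps2 \<Rightarrow> 'k ps2" where
  "d2_0 f = (\<lambda>(i,j). of_nat (i+1) * f (i+1, j))"
definition d2_1 :: "'k::comm_ring_1 ps2 \<Rightarrow> 'k ps2" where
  "d2_1 f = (\<lambda>(i,j). of_nat (j+1) * f (i, j+1))"
definition d3_0 :: "'k::comm_ring_1 ps3 \<Rightarrow> 'k ps3" where
  "d3_0 f = (\<lambda>(i,j,l). of_nat (i+1) * f (i+1, j, l))"
definition d3_1 :: "'k::comm_ring_1 ps3 \<Rightarrow> 'k ps3" where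
  "d3_1 f = (\<lambda>(i,j,l). of_nat (j+1) * f (i, j+1, l))"
definition d3_2 :: "'k::comm_ring_1 ps3 \<Rightarrow> 'k ps3" where
  "d3_2 f = (\<lambda>(i,j,l). of_nat (l+1) * f (i, j, l+1))"

text \<open>On k[[x0,x1]]: the bracket determined by {x0,x1} = -1, i.e.
  {f,g} = {x0,x1} (d0 f d1 g - d1 f d0 g).\<close>
definition B_bracket :: "'k::comm_ring_1 ps2 \<Rightarrow> 'k ps2 \<Rightarrow> 'k ps2" where
  "B_bracket f g = (\<lambda>m. - (ps2_mult (d2_0 f) (d2_1 g) m - ps2_mult (d2_1 f) (d2_0 g) m))"

text \<open>On k[[y0,y1,y2]]: the bracket determined by {y0,y1} = y0, {y0,y2} = 2 y1,
  {y1,y2} = y2, i.e. {f,g} = sum over i<j of {yi,yj} (di f dj g - dj f di g).\<close>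
definition wedge3 :: "('k::comm_ring_1 ps3 \<Rightarrow> 'k ps3) \<Rightarrow> ('k ps3 \<Rightarrow> 'k ps3) \<Rightarrow> 'k ps3 \<Rightarrow> 'k ps3 \<Rightarrow> 'k ps3" where
  "wedge3 D E f g = (\<lambda>m. ps3_mult (D f) (E g) m - ps3_mult (E f) (D g) m)"

definition P3_bracket :: "'k::comm_ring_1 ps3 \<Rightarrow> 'k ps3 \<Rightarrow> 'k ps3" where
  "P3_bracket f g = (\<lambda>m.
      ps3_mult y0 (wedge3 d3_0 d3_1 f g) m
    + ps3_mult (\<lambda>n. 2 * y1 n) (wedge3 d3_0 d3_2 f g) m
    + ps3_mult y2 (wedge3 d3_1 d3_2 f g) m)"

definition A_ideal :: "'k::comm_ring_1 ps3 set" where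
  "A_ideal = genideal PS3 {(\<lambda>m. ps3_mult y1 y1 m - ps3_mult y0 y2 m)}"

definition A_ring :: "('k::comm_ring_1 ps3 set) ring" where
  "A_ring = PS3 Quot A_ideal"

definition A_cls :: "'k::comm_ring_1 ps3 \<Rightarrow> 'k ps3 set" where
  "A_cls f = A_ideal +>\<^bsub>PS3\<^esub> f"

text \<open>Induced bracket on A (computed on representatives; well defined since
  y1^2 - y0 y2 is a Casimir).\<close>
definition A_bracket :: "'k::comm_ring_1 ps3 set \<Rightarrow> 'k ps3 set \<Rightarrow> 'k ps3 set" where
  "A_bracket X Y = A_cls (P3_bracket (SOME a. a \<in> X) (SOME b. b \<in> Y))"

text \<open>x \<mapsto> y0 and x \<mapsto> x0.\<close>
definition iotaA :: "'k::comm_ring_1 fps \<Rightarrow> 'k ps3 set" where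
  "iotaA h = A_cls (\<lambda>(i,j,l). if j = 0 \<and> l = 0 then fps_nth h i else 0)"
definition iotaB :: "'k::comm_ring_1 fps \<Rightarrow> 'k ps2" where
  "iotaB h = (\<lambda>(i,j). if j = 0 then fps_nth h i else 0)"

definition is_kx_alg_hom :: "('k::comm_ring_1 ps3 set \<Rightarrow> 'k ps2) \<Rightarrow> bool" where
  "is_kx_alg_hom \<phi> \<longleftrightarrow> \<phi> \<in> ring_hom A_ring PS2 \<and> (\<forall>h. \<phi> (iotaA h) = iotaB h)"

definition B_homog :: "nat \<Rightarrow> 'k::comm_ring_1 ps2 \<Rightarrow> bool" where
  "B_homog p f \<longleftrightarrow> (\<forall>i j. f (i,j) \<noteq> 0 \<longrightarrow> j = p)"

definition grading_preserving :: "('k::comm_ring_1 ps3 set \<Rightarrow> 'k ps2) \<Rightarrow> bool" where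
  "grading_preserving \<phi> \<longleftrightarrow>
     B_homog 0 (\<phi> (A_cls y0)) \<and> B_homog 1 (\<phi> (A_cls y1)) \<and> B_homog 2 (\<phi> (A_cls y2))"

definition is_poisson :: "('k::comm_ring_1 ps3 set \<Rightarrow> 'k ps2) \<Rightarrow> bool" where
  "is_poisson \<phi> \<longleftrightarrow> (\<forall>X\<in>carrier A_ring. \<forall>Y\<in>carrier A_ring.
       \<phi> (A_bracket X Y) = B_bracket (\<phi> X) (\<phi> Y))"

end

(* The substitution y0 |-> x0, y1 |-> -x0 x1, y2 |-> x0 x1^2 kills y1^2 - y0 y2 and sends the
   monomial y0^a y1^b y2^c to (-1)^b x0^(a+b+c) x1^(b+2c).  Every monomial in x0, x1 has only
   finitely many preimages, so the substitution is defined coefficientwise on power series, and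
   it descends to A.  It is Poisson by the chain rule, which follows from Euler's identities for
   the two gradings after cancelling x0, resp. x1.

   Conversely, a graded Poisson k[[x]]-algebra map psi sends y0 to x0, y1 to x1 g and y2 to
   x1^2 h with g, h in k[[x0]], and the relations {y0,y1} = y0, {y0,y2} = 2 y1 force g = -x0
   and h = x0.  All three images lie in (x0); writing F = c + y0 A + y1 B + y2 C then shows by
   induction on N that psi and the substitution agree modulo x0^N, hence agree.  So no
   continuity of psi is needed. *)

theory Submission
  imports Defs "HOL-Library.Product_Plus"
begin

unbundle fps_syntax

section \<open>Power series in two and three variables as iterated power series\<close>

text \<open>The first variable is the innermost one: \<open>fps_of_ps2 f $ j $ i\<close> is the coefficient
  of \<open>x0^i x1^j\<close>, and \<open>fps_of_ps3 f $ l $ j $ i\<close> that of \<open>y0^i y1^j y2^l\<close>.\<close>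

definition fps_of_ps2 :: "'k::comm_ring_1 ps2 \<Rightarrow> 'k fps fps" where
  "fps_of_ps2 f = Abs_fps (\<lambda>j. Abs_fps (\<lambda>i. f (i,j)))"

definition ps2_of_fps :: "'k::comm_ring_1 fps fps \<Rightarrow> 'k ps2" where
  "ps2_of_fps F = (\<lambda>(i,j). F $ j $ i)"

definition fps_of_ps3 :: "'k::comm_ring_1 ps3 \<Rightarrow> 'k fps fps fps" where
  "fps_of_ps3 f = Abs_fps (\<lambda>l. Abs_fps (\<lambda>j. Abs_fps (\<lambda>i. f (i,j,l))))"

definition ps3_of_fps :: "'k::comm_ring_1 fps fps fps \<Rightarrow> 'k ps3" where
  "ps3_of_fps F = (\<lambda>(i,j,l). F $ l $ j $ i)"

lemma fps_of_ps2_nth [simp]: "fps_of_ps2 f $ j $ i = f (i,j)"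
  by (simp add: fps_of_ps2_def)

lemma fps_of_ps3_nth [simp]: "fps_of_ps3 f $ l $ j $ i = f (i,j,l)"
  by (simp add: fps_of_ps3_def)

lemma ps2_of_fps_inverse [simp]: "fps_of_ps2 (ps2_of_fps F) = F"
  by (intro fps_ext) (simp add: ps2_of_fps_def)

lemma fps_of_ps2_inverse [simp]: "ps2_of_fps (fps_of_ps2 f) = f"
  by (auto simp: ps2_of_fps_def)

lemma ps3_of_fps_inverse [simp]: "fps_of_ps3 (ps3_of_fps F) = F"
  by (intro fps_ext) (simp add: ps3_of_fps_def)

lemma fps_of_ps3_inverse [simp]: "ps3_of_fps (fps_of_ps3 f) = f"
  by (auto simp: ps3_of_fps_def)

lemma fps_of_ps2_inject: "fps_of_ps2 f = fps_of_ps2 g \<longleftrightarrow> f = g"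
  by (metis fps_of_ps2_inverse)

lemma fps_of_ps3_inject: "fps_of_ps3 f = fps_of_ps3 g \<longleftrightarrow> f = g"
  by (metis fps_of_ps3_inverse)

lemma fps_of_ps2_add: "fps_of_ps2 (\<lambda>m. f m + g m) = fps_of_ps2 f + fps_of_ps2 g"
  and fps_of_ps2_diff: "fps_of_ps2 (\<lambda>m. f m - g m) = fps_of_ps2 f - fps_of_ps2 g"
  and fps_of_ps2_uminus: "fps_of_ps2 (\<lambda>m. - f m) = - fps_of_ps2 f"
  by ((rule fps_ext)+, simp)+

lemma fps_of_ps3_add: "fps_of_ps3 (\<lambda>m. f m + g m) = fps_of_ps3 f + fps_of_ps3 g"
  and fps_of_ps3_diff: "fps_of_ps3 (\<lambda>m. f m - g m) = fps_of_ps3 f - fps_of_ps3 g"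
  and fps_of_ps3_one: "fps_of_ps3 (\<lambda>m. if m = (0,0,0) then 1 else 0) = 1"
  by ((rule fps_ext)+, simp add: fps_one_nth)+

lemma fps_of_ps3_double: "fps_of_ps3 (\<lambda>m. 2 * f m) = 2 * fps_of_ps3 f"
  by (simp only: mult_2 fps_of_ps3_add)

lemma fps_of_ps2_mult: "fps_of_ps2 (ps2_mult f g) = fps_of_ps2 f * fps_of_ps2 g"
proof (intro fps_ext)
  fix j i
  have "(fps_of_ps2 f * fps_of_ps2 g) $ j $ i = (\<Sum>b\<le>j. \<Sum>a\<le>i. f (a,b) * g (i-a, j-b))"
    by (simp add: fps_mult_nth fps_sum_nth atLeast0AtMost)
  also have "\<dots> = ps2_mult f g (i,j)"
    unfolding ps2_mult_def by (simp add: sum.swap[of _ "{..j}" "{..i}"])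
  finally show "fps_of_ps2 (ps2_mult f g) $ j $ i = (fps_of_ps2 f * fps_of_ps2 g) $ j $ i"
    by simp
qed

lemma fps_of_ps3_mult: "fps_of_ps3 (ps3_mult f g) = fps_of_ps3 f * fps_of_ps3 g"
proof (intro fps_ext)
  fix l j i
  have "(fps_of_ps3 f * fps_of_ps3 g) $ l $ j $ i
      = (\<Sum>c\<le>l. \<Sum>b\<le>j. \<Sum>a\<le>i. f (a,b,c) * g (i-a, j-b, l-c))"
    by (simp add: fps_mult_nth fps_sum_nth atLeast0AtMost)
  also have "\<dots> = (\<Sum>c\<le>l. \<Sum>a\<le>i. \<Sum>b\<le>j. f (a,b,c) * g (i-a, j-b, l-c))"
    by (intro sum.cong refl sum.swap)
  also have "\<dots> = (\<Sum>a\<le>i. \<Sum>c\<le>l. \<Sum>b\<le>j. f (a,b,c) * g (i-a, j-b, l-c))"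
    by (rule sum.swap)
  also have "\<dots> = ps3_mult f g (i,j,l)"
    unfolding ps3_mult_def by (simp add: sum.swap[of _ "{..l}" "{..j}"])
  finally show "fps_of_ps3 (ps3_mult f g) $ l $ j $ i = (fps_of_ps3 f * fps_of_ps3 g) $ l $ j $ i"
    by simp
qed

lemma ps3_of_fps_mult: "ps3_of_fps (F * G) = ps3_mult (ps3_of_fps F) (ps3_of_fps G)"
  by (simp add: fps_of_ps3_inject[symmetric] fps_of_ps3_mult)

lemma ps3_of_fps_add: "ps3_of_fps (F + G) = (\<lambda>m. ps3_of_fps F m + ps3_of_fps G m)"
  by (simp add: fps_of_ps3_inject[symmetric] fps_of_ps3_add)

lemma cring_PS3: "cring (PS3 :: 'k::comm_ring_1 ps3 ring)"
proof (rule cringI)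
  show "abelian_group (PS3 :: 'k ps3 ring)"
  proof (rule abelian_groupI)
    fix x :: "'k ps3"
    show "\<exists>y\<in>carrier PS3. y \<oplus>\<^bsub>PS3\<^esub> x = \<zero>\<^bsub>PS3\<^esub>"
      by (rule bexI[of _ "\<lambda>m. - x m"]) (auto simp: PS3_def)
  qed (auto simp: PS3_def add.assoc add.commute)
  show "Group.comm_monoid (PS3 :: 'k ps3 ring)"
    by (rule comm_monoidI; simp add: PS3_def fps_of_ps3_inject[symmetric, of "ps3_mult _ _"]
        fps_of_ps3_mult fps_of_ps3_one mult_ac)
  show "(x \<oplus>\<^bsub>PS3\<^esub> y) \<otimes>\<^bsub>PS3\<^esub> z = x \<otimes>\<^bsub>PS3\<^esub> z \<oplus>\<^bsub>PS3\<^esub> y \<otimes>\<^bsub>PS3\<^esub> z"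
    for x y z :: "'k ps3"
    by (simp add: PS3_def fps_of_ps3_inject[symmetric] fps_of_ps3_mult fps_of_ps3_add
        distrib_right)
qed

section \<open>Partial derivatives and Poisson brackets\<close>

definition fps_map_coeffs :: "('a::zero \<Rightarrow> 'a) \<Rightarrow> 'a fps \<Rightarrow> 'a fps" where
  "fps_map_coeffs D F = Abs_fps (\<lambda>n. D (F $ n))"

lemma fps_map_coeffs_nth [simp]: "fps_map_coeffs D F $ n = D (F $ n)"
  by (simp add: fps_map_coeffs_def)

definition is_derivation :: "('a::comm_ring_1 \<Rightarrow> 'a) \<Rightarrow> bool" where
  "is_derivation D \<longleftrightarrow> (\<forall>a b. D (a + b) = D a + D b) \<and> (\<forall>a b. D (a * b) = D a * b + a * D b)"

context
  fixes D :: "'a::comm_ring_1 \<Rightarrow> 'a"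
  assumes D: "is_derivation D"
begin

lemma derivation_add: "D (a + b) = D a + D b"
  using D by (simp add: is_derivation_def)

lemma derivation_mult: "D (a * b) = D a * b + a * D b"
  using D by (simp add: is_derivation_def)

lemma derivation_zero: "D 0 = 0"
  using derivation_add[of 0 0] by simp

lemma derivation_one: "D 1 = 0"
  using derivation_mult[of 1 1] by simp

lemma derivation_uminus: "D (- a) = - D a"
  using derivation_add[of a "- a"] by (simp add: derivation_zero eq_neg_iff_add_eq_0 add.commute)

lemma derivation_diff: "D (a - b) = D a - D b"
  using derivation_add[of a "- b"] by (simp add: derivation_uminus)

lemma derivation_sum: "D (sum f S) = (\<Sum>x\<in>S. D (f x))"
  by (induction S rule: infinite_finite_induct) (simp_all add: derivation_zero derivation_add)

lemma is_derivation_fps_map_coeffs: "is_derivation (fps_map_coeffs D)"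
  unfolding is_derivation_def
  by (auto intro!: fps_ext simp: fps_mult_nth derivation_add derivation_sum derivation_mult
      sum.distrib)

lemma fps_map_coeffs_const: "fps_map_coeffs D (fps_const c) = fps_const (D c)"
  by (rule fps_ext) (simp add: derivation_zero)

lemma fps_map_coeffs_X: "fps_map_coeffs D fps_X = 0"
  by (rule fps_ext) (simp add: derivation_zero derivation_one)

end

definition wedge :: "('a::comm_ring_1 \<Rightarrow> 'a) \<Rightarrow> ('a \<Rightarrow> 'a) \<Rightarrow> 'a \<Rightarrow> 'a \<Rightarrow> 'a" where
  "wedge D E F G = D F * E G - E F * D G"

lemma wedge_antisym: "wedge D E G F = - wedge D E F G"
  by (simp add: wedge_def)

lemma wedge_add_right:
  assumes "is_derivation D" "is_derivation E"
  shows "wedge D E F (G + H) = wedge D E F G + wedge D E F H"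
  by (simp add: wedge_def derivation_add[OF assms(1)] derivation_add[OF assms(2)] algebra_simps)

lemma wedge_mult_right:
  assumes "is_derivation D" "is_derivation E"
  shows "wedge D E F (G * H) = G * wedge D E F H + H * wedge D E F G"
  by (simp add: wedge_def derivation_mult[OF assms(1)] derivation_mult[OF assms(2)] algebra_simps)

lemma is_derivation_fps_deriv: "is_derivation fps_deriv"
  by (simp add: is_derivation_def algebra_simps)

definition Y0 :: "'k::comm_ring_1 fps fps fps" where "Y0 = fps_const (fps_const fps_X)"
definition Y1 :: "'k::comm_ring_1 fps fps fps" where "Y1 = fps_const fps_X"
definition Y2 :: "'k::comm_ring_1 fps fps fps" where "Y2 = fps_X"
definition X0 :: "'k::comm_ring_1 fps fps" where "X0 = fps_const fps_X"
definition X1 :: "'k::comm_ring_1 fps fps" where "X1 = fps_X"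

abbreviation "Dy0 \<equiv> (fps_map_coeffs (fps_map_coeffs fps_deriv) :: 'k::comm_ring_1 fps fps fps \<Rightarrow> _)"
abbreviation "Dy1 \<equiv> (fps_map_coeffs fps_deriv :: 'k::comm_ring_1 fps fps fps \<Rightarrow> _)"
abbreviation "Dy2 \<equiv> (fps_deriv :: 'k::comm_ring_1 fps fps fps \<Rightarrow> _)"
abbreviation "Dx0 \<equiv> (fps_map_coeffs fps_deriv :: 'k::comm_ring_1 fps fps \<Rightarrow> _)"
abbreviation "Dx1 \<equiv> (fps_deriv :: 'k::comm_ring_1 fps fps \<Rightarrow> _)"

lemma is_derivation_partials:
  "is_derivation Dy0" "is_derivation Dy1" "is_derivation Dy2"
  "is_derivation Dx0" "is_derivation Dx1"
  by (simp_all add: is_derivation_fps_map_coeffs is_derivation_fps_deriv)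

lemma partials_variables:
  "Dy0 Y0 = 1" "Dy0 Y1 = 0" "Dy0 Y2 = 0"
  "Dy1 Y0 = 0" "Dy1 Y1 = 1" "Dy1 Y2 = 0"
  "Dy2 Y0 = 0" "Dy2 Y1 = 0" "Dy2 Y2 = 1"
  "Dx0 X0 = 1" "Dx0 X1 = 0" "Dx1 X0 = 0" "Dx1 X1 = 1"
  by (simp_all add: Y0_def Y1_def Y2_def X0_def X1_def fps_map_coeffs_const fps_map_coeffs_X
      is_derivation_fps_map_coeffs is_derivation_fps_deriv)

lemma fps_of_ps3_variables: "fps_of_ps3 y0 = Y0" "fps_of_ps3 y1 = Y1" "fps_of_ps3 y2 = Y2"
  by ((rule fps_ext)+, simp add: y0_def y1_def y2_def Y0_def Y1_def Y2_def)+

lemma fps_of_ps2_variables: "fps_of_ps2 x0 = X0" "fps_of_ps2 x1 = X1"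
  by ((rule fps_ext)+, simp add: x0_def x1_def X0_def X1_def)+

lemma fps_of_ps3_partials:
  "fps_of_ps3 (d3_0 f) = Dy0 (fps_of_ps3 f)"
  "fps_of_ps3 (d3_1 f) = Dy1 (fps_of_ps3 f)"
  "fps_of_ps3 (d3_2 f) = Dy2 (fps_of_ps3 f)"
  by ((rule fps_ext)+, simp add: d3_0_def d3_1_def d3_2_def del: of_nat_Suc of_nat_add)+

lemma fps_of_ps2_partials:
  "fps_of_ps2 (d2_0 f) = Dx0 (fps_of_ps2 f)" "fps_of_ps2 (d2_1 f) = Dx1 (fps_of_ps2 f)"
  by ((rule fps_ext)+, simp add: d2_0_def d2_1_def del: of_nat_Suc of_nat_add)+

definition poisson_y :: "'k::comm_ring_1 fps fps fps \<Rightarrow> 'k fps fps fps \<Rightarrow> 'k fps fps fps" where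
  "poisson_y F G = Y0 * wedge Dy0 Dy1 F G + 2 * Y1 * wedge Dy0 Dy2 F G + Y2 * wedge Dy1 Dy2 F G"

definition poisson_x :: "'k::comm_ring_1 fps fps \<Rightarrow> 'k fps fps \<Rightarrow> 'k fps fps" where
  "poisson_x F G = - wedge Dx0 Dx1 F G"

lemma fps_of_ps3_P3_bracket: "fps_of_ps3 (P3_bracket f g) = poisson_y (fps_of_ps3 f) (fps_of_ps3 g)"
  unfolding P3_bracket_def wedge3_def poisson_y_def wedge_def
  by (simp only: fps_of_ps3_mult fps_of_ps3_add fps_of_ps3_diff fps_of_ps3_double
      fps_of_ps3_partials fps_of_ps3_variables mult.assoc)

lemma fps_of_ps2_B_bracket: "fps_of_ps2 (B_bracket f g) = poisson_x (fps_of_ps2 f) (fps_of_ps2 g)"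
  unfolding B_bracket_def poisson_x_def wedge_def
  by (simp only: fps_of_ps2_uminus fps_of_ps2_diff fps_of_ps2_mult fps_of_ps2_partials)

lemma poisson_y_antisym: "poisson_y G F = - poisson_y F G"
  unfolding poisson_y_def wedge_antisym[of _ _ G F] by (simp add: algebra_simps)

lemma poisson_y_add_right: "poisson_y F (G + H) = poisson_y F G + poisson_y F H"
  by (simp add: poisson_y_def wedge_add_right is_derivation_partials algebra_simps)

lemma poisson_y_add_left: "poisson_y (G + H) F = poisson_y G F + poisson_y H F"
  by (metis poisson_y_antisym poisson_y_add_right minus_add_distrib)

lemma poisson_y_mult_right: "poisson_y F (G * H) = G * poisson_y F H + H * poisson_y F G"
  by (simp add: poisson_y_def wedge_mult_right is_derivation_partials algebra_simps)

abbreviation "Q \<equiv> (Y1 * Y1 - Y0 * Y2 :: 'k::comm_ring_1 fps fps fps)"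

lemma poisson_y_casimir: "poisson_y F Q = 0"
proof -
  note derivation_rules = derivation_diff[OF is_derivation_partials(1)]
    derivation_diff[OF is_derivation_partials(2)] derivation_diff[OF is_derivation_partials(3)]
    derivation_mult[OF is_derivation_partials(1)] derivation_mult[OF is_derivation_partials(2)]
    derivation_mult[OF is_derivation_partials(3)]
  have partials_Q: "Dy0 Q = - Y2" "Dy1 Q = Y1 + Y1" "Dy2 Q = - Y0"
    by (simp_all only: derivation_rules partials_variables) simp_all
  show ?thesis
    unfolding poisson_y_def wedge_def partials_Q by (simp add: algebra_simps)
qed

text \<open>Since \<open>y1\<^sup>2 - y0 y2\<close> is a Casimir, the bracket descends to \<open>A\<close>.\<close>

lemma poisson_y_mod_casimir:
  "poisson_y (F + R * Q) (G + S * Q)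
     = poisson_y F G + (poisson_y F S - poisson_y G R + poisson_y (R * Q) S) * Q"
proof -
  have "poisson_y (F + R * Q) (G + S * Q)
      = poisson_y F G + poisson_y F (S * Q) + poisson_y (R * Q) G + poisson_y (R * Q) (S * Q)"
    by (simp only: poisson_y_add_left poisson_y_add_right add_ac)
  also have "poisson_y F (S * Q) = Q * poisson_y F S"
    by (simp only: poisson_y_mult_right poisson_y_casimir mult_zero_right add_0_left add_0_right)
  also have "poisson_y (R * Q) G = - (Q * poisson_y G R)"
    by (simp only: poisson_y_antisym[of "R * Q"] poisson_y_mult_right poisson_y_casimir
        mult_zero_right add_0_left add_0_right)
  also have "poisson_y (R * Q) (S * Q) = Q * poisson_y (R * Q) S"
    by (simp only: poisson_y_mult_right poisson_y_casimir mult_zero_right add_0_left add_0_right)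
  finally show ?thesis
    by (simp add: algebra_simps)
qed

section \<open>The quotient algebra \<open>A\<close> and its bracket\<close>

lemma fps_of_ps3_casimir: "fps_of_ps3 (\<lambda>m. ps3_mult y1 y1 m - ps3_mult y0 y2 m) = Q"
  by (simp only: fps_of_ps3_diff fps_of_ps3_mult fps_of_ps3_variables)

lemma A_ideal_eq: "(A_ideal :: 'k::comm_ring_1 ps3 set) = {h. \<exists>R. fps_of_ps3 h = R * Q}"
proof -
  let ?q = "\<lambda>m. ps3_mult y1 y1 m - ps3_mult y0 y2 m :: 'k"
  have "(A_ideal :: 'k ps3 set) = cgenideal PS3 ?q"
    unfolding A_ideal_def
    by (rule cring.cgenideal_eq_genideal[OF cring_PS3, symmetric]) (simp add: PS3_def)
  also have "\<dots> = {h. \<exists>x. h = ps3_mult x ?q}"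
    by (auto simp: cgenideal_def PS3_def)
  also have "\<dots> = {h. \<exists>R. fps_of_ps3 h = R * Q}"
  proof (intro Collect_cong iffI)
    fix h :: "'k ps3" assume "\<exists>x. h = ps3_mult x ?q"
    then show "\<exists>R. fps_of_ps3 h = R * Q"
      by (auto simp: fps_of_ps3_mult fps_of_ps3_casimir)
  next
    fix h :: "'k ps3" assume "\<exists>R. fps_of_ps3 h = R * Q"
    then obtain R where "fps_of_ps3 h = fps_of_ps3 (ps3_mult (ps3_of_fps R) ?q)"
      by (auto simp: fps_of_ps3_mult fps_of_ps3_casimir)
    then show "\<exists>x. h = ps3_mult x ?q"
      by (auto simp: fps_of_ps3_inject)
  qed
  finally show ?thesis .
qed

lemma ideal_A_ideal: "ideal (A_ideal :: 'k::comm_ring_1 ps3 set) PS3"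
  unfolding A_ideal_def
  by (rule ring.genideal_ideal[OF cring.axioms(1)[OF cring_PS3]]) (simp add: PS3_def)

lemma mem_A_cls_iff: "a \<in> A_cls f \<longleftrightarrow> (\<exists>R. fps_of_ps3 a = fps_of_ps3 f + R * Q)"
proof -
  have "a \<in> A_cls f \<longleftrightarrow> (\<exists>h\<in>A_ideal. a = (\<lambda>m. h m + f m))"
    by (auto simp: A_cls_def a_r_coset_def r_coset_def PS3_def)
  also have "\<dots> \<longleftrightarrow> (\<exists>R. fps_of_ps3 a = fps_of_ps3 f + R * Q)"
  proof
    assume "\<exists>h\<in>A_ideal. a = (\<lambda>m. h m + f m)"
    then show "\<exists>R. fps_of_ps3 a = fps_of_ps3 f + R * Q"
      by (auto simp: A_ideal_eq fps_of_ps3_add)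
  next
    assume "\<exists>R. fps_of_ps3 a = fps_of_ps3 f + R * Q"
    then obtain R where "fps_of_ps3 a = fps_of_ps3 (\<lambda>m. ps3_of_fps (R * Q) m + f m)"
      by (auto simp: fps_of_ps3_add)
    then have "a = (\<lambda>m. ps3_of_fps (R * Q) m + f m)"
      by (simp only: fps_of_ps3_inject)
    moreover have "ps3_of_fps (R * Q) \<in> A_ideal"
      unfolding A_ideal_eq by auto
    ultimately show "\<exists>h\<in>A_ideal. a = (\<lambda>m. h m + f m)"
      by blast
  qed
  finally show ?thesis .
qed

lemma A_cls_self: "f \<in> A_cls f"
proof -
  interpret ideal A_ideal PS3 by (rule ideal_A_ideal)
  show ?thesis
    unfolding A_cls_def by (rule a_rcos_self) (simp add: PS3_def)
qed

lemma A_cls_eqI: "a \<in> A_cls f \<Longrightarrow> A_cls a = A_cls f"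
proof -
  interpret ideal A_ideal PS3 by (rule ideal_A_ideal)
  show "a \<in> A_cls f \<Longrightarrow> A_cls a = A_cls f"
    unfolding A_cls_def by (rule a_repr_independence'[symmetric]) (simp_all add: PS3_def)
qed

lemma A_cls_ring_hom: "A_cls \<in> ring_hom PS3 A_ring"
  using ideal.rcos_ring_hom[OF ideal_A_ideal] unfolding A_cls_def[abs_def] A_ring_def .

lemma A_cls_in_carrier: "A_cls f \<in> carrier A_ring"
  using ring_hom_closed[OF A_cls_ring_hom] by (simp add: PS3_def)

lemma A_ring_carrier_cases:
  assumes "X \<in> carrier A_ring"
  obtains f where "X = A_cls f"
  using assms by (auto simp: A_ring_def FactRing_def A_RCOSETS_def' A_cls_def PS3_def)

lemma A_bracket_cls: "A_bracket (A_cls f) (A_cls g) = A_cls (P3_bracket f g)"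
proof -
  define a where "a = (SOME a. a \<in> A_cls f)"
  define b where "b = (SOME b. b \<in> A_cls g)"
  have "a \<in> A_cls f"
    unfolding a_def by (rule someI[of "\<lambda>a. a \<in> A_cls _", OF A_cls_self])
  moreover have "b \<in> A_cls g"
    unfolding b_def by (rule someI[of "\<lambda>a. a \<in> A_cls _", OF A_cls_self])
  ultimately obtain R S
    where a: "fps_of_ps3 a = fps_of_ps3 f + R * Q" and b: "fps_of_ps3 b = fps_of_ps3 g + S * Q"
    unfolding mem_A_cls_iff by blast
  have "P3_bracket a b \<in> A_cls (P3_bracket f g)"
    unfolding mem_A_cls_iff fps_of_ps3_P3_bracket a b poisson_y_mod_casimir by blast
  then show ?thesis
    unfolding A_bracket_def a_def[symmetric] b_def[symmetric] by (rule A_cls_eqI)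
qed

section \<open>The substitution \<open>y0 \<mapsto> x0, y1 \<mapsto> -x0 x1, y2 \<mapsto> x0 x1\<^sup>2\<close>\<close>

definition cauchy_prod :: "('a::plus \<Rightarrow> 'k::comm_ring_1) \<Rightarrow> ('a \<Rightarrow> 'k) \<Rightarrow> 'a \<Rightarrow> 'k" where
  "cauchy_prod f g n = (\<Sum>pq | fst pq + snd pq = n. f (fst pq) * g (snd pq))"

text \<open>For a monoid homomorphism \<open>e\<close> with finite fibres and a multiplicative \<open>\<chi>\<close>, this is the
  substitution of \<open>\<chi> p z^(e p)\<close> for each monomial \<open>z^p\<close> of a power series.\<close>

definition pushforward :: "('a \<Rightarrow> 'b) \<Rightarrow> ('a \<Rightarrow> 'k::comm_ring_1) \<Rightarrow> ('a \<Rightarrow> 'k) \<Rightarrow> 'b \<Rightarrow> 'k" where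
  "pushforward e \<chi> f m = (\<Sum>p | e p = m. \<chi> p * f p)"

lemma pushforward_cauchy_prod:
  fixes e :: "'a::comm_monoid_add \<Rightarrow> 'b::comm_monoid_add" and \<chi> :: "'a \<Rightarrow> 'k::comm_ring_1"
  assumes fin_source: "\<And>n. finite {pq. fst pq + snd pq = (n::'a)}"
    and fin_target: "\<And>m. finite {pq. fst pq + snd pq = (m::'b)}"
    and fin_fibre: "\<And>m. finite {p. e p = m}"
    and e_add: "\<And>p q. e (p + q) = e p + e q"
    and \<chi>_add: "\<And>p q. \<chi> (p + q) = \<chi> p * \<chi> q"
  shows "pushforward e \<chi> (cauchy_prod f g) m
    = cauchy_prod (pushforward e \<chi> f) (pushforward e \<chi> g) m"
proof -
  \<comment> \<open>Both sides sum \<open>h\<close> over the pairs in \<open>P\<close>, grouped by \<open>p + q\<close>, resp. by \<open>(e p, e q)\<close>.\<close>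
  define P where "P = {pq. e (fst pq) + e (snd pq) = m}"
  define h where "h = (\<lambda>pq. \<chi> (fst pq) * f (fst pq) * (\<chi> (snd pq) * g (snd pq)))"
  have "P = (\<Union>n\<in>{n. e n = m}. {pq. fst pq + snd pq = n})"
    by (auto simp: P_def e_add[symmetric])
  then have finP: "finite P"
    using fin_source fin_fibre by simp
  have "pushforward e \<chi> (cauchy_prod f g) m
      = (\<Sum>n | e n = m. \<Sum>pq | fst pq + snd pq = n. \<chi> n * (f (fst pq) * g (snd pq)))"
    by (simp add: pushforward_def cauchy_prod_def sum_distrib_left)
  also have "\<dots> = (\<Sum>n | e n = m. sum h {pq \<in> P. fst pq + snd pq = n})"
  proof (rule sum.cong[OF refl])
    fix n assume "n \<in> {n. e n = m}"
    then have "{pq \<in> P. fst pq + snd pq = n} = {pq. fst pq + snd pq = n}"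
      by (auto simp: P_def e_add[symmetric])
    then show "(\<Sum>pq | fst pq + snd pq = n. \<chi> n * (f (fst pq) * g (snd pq)))
        = sum h {pq \<in> P. fst pq + snd pq = n}"
      by (auto simp: h_def \<chi>_add mult_ac intro!: sum.cong)
  qed
  also have "\<dots> = sum h P"
    by (rule sum.group[OF finP fin_fibre]) (auto simp: P_def e_add)
  also have "\<dots> = (\<Sum>mm | fst mm + snd mm = m. sum h {pq \<in> P. (e (fst pq), e (snd pq)) = mm})"
    by (rule sum.group[OF finP fin_target, symmetric]) (auto simp: P_def)
  also have "\<dots> = (\<Sum>mm | fst mm + snd mm = m. \<Sum>pq \<in> {p. e p = fst mm} \<times> {q. e q = snd mm}. h pq)"
    by (intro sum.cong refl arg_cong[where f = "sum h"]) (auto simp: P_def)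
  also have "\<dots> = cauchy_prod (pushforward e \<chi> f) (pushforward e \<chi> g) m"
    by (simp add: cauchy_prod_def pushforward_def h_def sum_product sum.cartesian_product
        case_prod_beta)
  finally show ?thesis .
qed

lemma antidiagonal2_eq:
  "{pq. fst pq + snd pq = ((i,j) :: nat \<times> nat)}
     = (\<lambda>(a,b). ((a,b), (i-a, j-b))) ` ({..i} \<times> {..j})"
  by (auto simp: add_Pair image_iff)

lemma antidiagonal3_eq:
  "{pq. fst pq + snd pq = ((i,j,l) :: nat \<times> nat \<times> nat)}
     = (\<lambda>(a,b,c). ((a,b,c), (i-a, j-b, l-c))) ` ({..i} \<times> {..j} \<times> {..l})"
  by (auto simp: add_Pair image_iff)

lemma finite_antidiagonal2: "finite {pq. fst pq + snd pq = (n :: nat \<times> nat)}"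
  by (cases n) (simp add: antidiagonal2_eq)

lemma finite_antidiagonal3: "finite {pq. fst pq + snd pq = (n :: nat \<times> nat \<times> nat)}"
  by (cases n) (simp add: antidiagonal3_eq)

lemma ps2_mult_eq_cauchy_prod: "ps2_mult f g = cauchy_prod f g"
proof
  fix n :: "nat \<times> nat"
  obtain i j where n: "n = (i,j)" by (cases n)
  have inj: "inj_on (\<lambda>(a,b). ((a,b), (i-a, j-b))) ({..i} \<times> {..j})"
    by (auto simp: inj_on_def)
  have "cauchy_prod f g n = (\<Sum>x\<in>{..i} \<times> {..j}. f x * g (i - fst x, j - snd x))"
    unfolding cauchy_prod_def n antidiagonal2_eq
    by (subst sum.reindex[OF inj]) (auto simp: case_prod_beta intro!: sum.cong)
  then show "ps2_mult f g n = cauchy_prod f g n"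
    by (simp add: n ps2_mult_def sum.cartesian_product')
qed

lemma ps3_mult_eq_cauchy_prod: "ps3_mult f g = cauchy_prod f g"
proof
  fix n :: "nat \<times> nat \<times> nat"
  obtain i j l where n: "n = (i,j,l)" by (cases n)
  have inj: "inj_on (\<lambda>(a,b,c). ((a,b,c), (i-a, j-b, l-c))) ({..i} \<times> {..j} \<times> {..l})"
    by (auto simp: inj_on_def)
  have "cauchy_prod f g n
      = (\<Sum>x\<in>{..i} \<times> {..j} \<times> {..l}. f x * g (i - fst x, j - fst (snd x), l - snd (snd x)))"
    unfolding cauchy_prod_def n antidiagonal3_eq
    by (subst sum.reindex[OF inj]) (auto simp: case_prod_beta intro!: sum.cong)
  then show "ps3_mult f g n = cauchy_prod f g n"
    by (simp add: n ps3_mult_def sum.cartesian_product')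
qed

definition subst_exp :: "nat \<times> nat \<times> nat \<Rightarrow> nat \<times> nat" where
  "subst_exp = (\<lambda>(a,b,c). (a + b + c, b + 2 * c))"

definition subst_sign :: "nat \<times> nat \<times> nat \<Rightarrow> 'k::comm_ring_1" where
  "subst_sign = (\<lambda>(a,b,c). (-1) ^ b)"

definition subst :: "'k::comm_ring_1 ps3 \<Rightarrow> 'k ps2" where
  "subst = pushforward subst_exp subst_sign"

lemma finite_subst_exp_fibre: "finite {p. subst_exp p = m}"
proof -
  obtain i j where m: "m = (i,j)" by (cases m)
  have "{p. subst_exp p = m} \<subseteq> {..i} \<times> {..i} \<times> {..i}"
    by (auto simp: subst_exp_def m)
  then show ?thesis
    by (rule finite_subset) simp
qed

lemma subst_exp_add: "subst_exp (p + q) = subst_exp p + subst_exp q"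
  by (cases p, cases q) (simp add: subst_exp_def)

lemma subst_sign_add: "subst_sign (p + q) = subst_sign p * subst_sign q"
  by (cases p, cases q) (simp add: subst_sign_def power_add)

lemma subst_mult: "subst (ps3_mult f g) = ps2_mult (subst f) (subst g)"
  unfolding subst_def ps3_mult_eq_cauchy_prod ps2_mult_eq_cauchy_prod
  by (rule ext, rule pushforward_cauchy_prod[OF finite_antidiagonal3 finite_antidiagonal2
        finite_subst_exp_fibre subst_exp_add subst_sign_add])

lemma subst_indicator:
  "subst (\<lambda>p. if p = q then c else 0) = (\<lambda>m. if m = subst_exp q then subst_sign q * c else 0)"
proof
  fix m
  have "subst (\<lambda>p. if p = q then c else 0) m
      = (\<Sum>p | subst_exp p = m. if p = q then subst_sign q * c else 0)"
    by (simp add: subst_def pushforward_def if_distrib cong: if_cong)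
  also have "\<dots> = (if m = subst_exp q then subst_sign q * c else 0)"
    by (auto simp: finite_subst_exp_fibre)
  finally show "subst (\<lambda>p. if p = q then c else 0) m
      = (if m = subst_exp q then subst_sign q * c else 0)" .
qed

lemma subst_add: "subst (\<lambda>m. f m + g m) = (\<lambda>m. subst f m + subst g m)"
  by (rule ext) (simp add: subst_def pushforward_def sum.distrib ring_distribs)

lemma subst_one: "subst (\<lambda>m. if m = (0,0,0) then 1 else 0) = (\<lambda>m. if m = (0,0) then 1 else 0)"
  by (rule ext) (simp add: subst_indicator subst_exp_def subst_sign_def)

definition subst_fps :: "'k::comm_ring_1 fps fps fps \<Rightarrow> 'k fps fps" where
  "subst_fps F = fps_of_ps2 (subst (ps3_of_fps F))"

lemma fps_of_ps2_subst: "fps_of_ps2 (subst f) = subst_fps (fps_of_ps3 f)"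
  by (simp add: subst_fps_def)

lemma subst_eq_subst_fps: "subst f = ps2_of_fps (subst_fps (fps_of_ps3 f))"
  by (simp add: subst_fps_def)

lemma subst_fps_nth:
  "subst_fps F $ j $ i = (\<Sum>p | subst_exp p = (i,j). subst_sign p * ps3_of_fps F p)"
  by (simp add: subst_fps_def subst_def pushforward_def)

lemma subst_fps_mult: "subst_fps (F * G) = subst_fps F * subst_fps G"
  by (simp add: subst_fps_def ps3_of_fps_mult subst_mult fps_of_ps2_mult)

lemma subst_fps_add: "subst_fps (F + G) = subst_fps F + subst_fps G"
  and subst_fps_diff: "subst_fps (F - G) = subst_fps F - subst_fps G"
  by ((rule fps_ext)+, simp add: subst_fps_nth ps3_of_fps_def case_prod_beta sum.distrib
      sum_subtractf ring_distribs)+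

lemma subst_fps_const: "subst_fps (fps_const (fps_const h)) = fps_const h"
proof (intro fps_ext)
  fix j i
  have "subst_fps (fps_const (fps_const h)) $ j $ i
      = (\<Sum>p | subst_exp p = (i,j). if p = (i,0,0) then fps_const h $ j $ i else 0)"
    unfolding subst_fps_nth
  proof (rule sum.cong[OF refl])
    fix p assume "p \<in> {p. subst_exp p = (i,j)}"
    moreover obtain a b c where "p = (a,b,c)" by (cases p)
    ultimately show "subst_sign p * ps3_of_fps (fps_const (fps_const h)) p
        = (if p = (i,0,0) then fps_const h $ j $ i else 0)"
      by (auto simp: subst_exp_def subst_sign_def ps3_of_fps_def)
  qed
  also have "\<dots> = fps_const h $ j $ i"
    by (simp add: finite_subst_exp_fibre) (simp add: subst_exp_def)
  finally show "subst_fps (fps_const (fps_const h)) $ j $ i = fps_const h $ j $ i" .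
qed

lemma subst_fps_one: "subst_fps 1 = 1"
  using subst_fps_const[of 1] by simp

lemma subst_fps_Y0: "subst_fps Y0 = X0"
  unfolding fps_of_ps3_variables[symmetric] fps_of_ps2_subst[symmetric]
  by (intro fps_ext) (auto simp: y0_def subst_indicator subst_exp_def subst_sign_def X0_def)

lemma subst_fps_Y1: "subst_fps Y1 = - (X0 * X1)"
  unfolding fps_of_ps3_variables[symmetric] fps_of_ps2_subst[symmetric]
  by (intro fps_ext) (auto simp: y1_def subst_indicator subst_exp_def subst_sign_def X0_def X1_def)

lemma subst_fps_Y2: "subst_fps Y2 = X0 * (X1 * X1)"
  unfolding fps_of_ps3_variables[symmetric] fps_of_ps2_subst[symmetric]
  by (intro fps_ext) (auto simp: y2_def subst_indicator subst_exp_def subst_sign_def X0_def X1_def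
      power2_eq_square[symmetric])

lemma subst_fps_casimir: "subst_fps Q = 0"
  by (simp add: subst_fps_diff subst_fps_mult subst_fps_Y0 subst_fps_Y1 subst_fps_Y2
      algebra_simps)

section \<open>The substitution is Poisson\<close>

lemma euler_y:
  "(Y0 * Dy0 F) $ l $ j $ i = of_nat i * F $ l $ j $ i"
  "(Y1 * Dy1 F) $ l $ j $ i = of_nat j * F $ l $ j $ i"
  "(Y2 * Dy2 F) $ l $ j $ i = of_nat l * F $ l $ j $ i"
  by (cases i; cases j; cases l; simp add: Y0_def Y1_def Y2_def del: of_nat_Suc of_nat_add)+

lemma euler_x:
  "(X0 * Dx0 G) $ j $ i = of_nat i * G $ j $ i"
  "(X1 * Dx1 G) $ j $ i = of_nat j * G $ j $ i"
  by (cases i; cases j; simp add: X0_def X1_def del: of_nat_Suc of_nat_add)+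

text \<open>The substitution respects the weights \<open>y0, y1, y2 \<mapsto> 1\<close> and \<open>y0, y1, y2 \<mapsto> 0, 1, 2\<close>
  of the \<open>x0\<close>- and \<open>x1\<close>-degree, so it intertwines the corresponding Euler operators.\<close>

lemma subst_fps_euler_x0:
  "X0 * Dx0 (subst_fps F) = subst_fps (Y0 * Dy0 F + Y1 * Dy1 F + Y2 * Dy2 F)"
proof (intro fps_ext)
  fix j i
  have "(X0 * Dx0 (subst_fps F)) $ j $ i
      = (\<Sum>p | subst_exp p = (i,j). of_nat i * (subst_sign p * ps3_of_fps F p))"
    by (simp only: euler_x subst_fps_nth sum_distrib_left)
  also have "\<dots> = (\<Sum>p | subst_exp p = (i,j).
      subst_sign p * ps3_of_fps (Y0 * Dy0 F + Y1 * Dy1 F + Y2 * Dy2 F) p)"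
  proof (rule sum.cong[OF refl])
    fix p assume "p \<in> {p. subst_exp p = (i,j)}"
    moreover obtain a b c where "p = (a,b,c)" by (cases p)
    ultimately have "p = (a,b,c)" "i = a + b + c"
      by (simp_all add: subst_exp_def)
    then show "of_nat i * (subst_sign p * ps3_of_fps F p)
        = subst_sign p * ps3_of_fps (Y0 * Dy0 F + Y1 * Dy1 F + Y2 * Dy2 F) p"
      by (simp add: ps3_of_fps_def euler_y algebra_simps)
  qed
  finally show "(X0 * Dx0 (subst_fps F)) $ j $ i
      = subst_fps (Y0 * Dy0 F + Y1 * Dy1 F + Y2 * Dy2 F) $ j $ i"
    by (simp only: subst_fps_nth)
qed

lemma subst_fps_euler_x1:
  "X1 * Dx1 (subst_fps F) = subst_fps (Y1 * Dy1 F + 2 * (Y2 * Dy2 F))"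
proof (intro fps_ext)
  fix j i
  have "(X1 * Dx1 (subst_fps F)) $ j $ i
      = (\<Sum>p | subst_exp p = (i,j). of_nat j * (subst_sign p * ps3_of_fps F p))"
    by (simp only: euler_x subst_fps_nth sum_distrib_left)
  also have "\<dots> = (\<Sum>p | subst_exp p = (i,j).
      subst_sign p * ps3_of_fps (Y1 * Dy1 F + 2 * (Y2 * Dy2 F)) p)"
  proof (rule sum.cong[OF refl])
    fix p assume "p \<in> {p. subst_exp p = (i,j)}"
    moreover obtain a b c where "p = (a,b,c)" by (cases p)
    ultimately have "p = (a,b,c)" "j = b + 2 * c"
      by (simp_all add: subst_exp_def)
    then show "of_nat j * (subst_sign p * ps3_of_fps F p)
        = subst_sign p * ps3_of_fps (Y1 * Dy1 F + 2 * (Y2 * Dy2 F)) p"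
      by (simp add: ps3_of_fps_def euler_y numeral_fps_const) (simp add: algebra_simps)
  qed
  finally show "(X1 * Dx1 (subst_fps F)) $ j $ i
      = subst_fps (Y1 * Dy1 F + 2 * (Y2 * Dy2 F)) $ j $ i"
    by (simp only: subst_fps_nth)
qed

lemma X0_nonzero: "(X0 :: 'k::{comm_ring_1,ring_no_zero_divisors} fps fps) \<noteq> 0"
  by (metis X0_def fps_X_neq_zero fps_const_eq_0_iff)

lemma X1_nonzero: "(X1 :: 'k::{comm_ring_1,ring_no_zero_divisors} fps fps) \<noteq> 0"
  by (simp add: X1_def)

lemma subst_fps_two: "subst_fps 2 = 2"
  using subst_fps_add[of 1 1] by (simp add: subst_fps_one)

lemma subst_fps_deriv_x0:
  "Dx0 (subst_fps (F :: 'k::idom fps fps fps))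
     = subst_fps (Dy0 F) - X1 * subst_fps (Dy1 F) + X1 * X1 * subst_fps (Dy2 F)"
proof -
  have "X0 * Dx0 (subst_fps F)
      = X0 * (subst_fps (Dy0 F) - X1 * subst_fps (Dy1 F) + X1 * X1 * subst_fps (Dy2 F))"
    by (simp add: subst_fps_euler_x0 subst_fps_add subst_fps_mult subst_fps_Y0 subst_fps_Y1
        subst_fps_Y2 algebra_simps)
  then show ?thesis
    by (simp only: mult_left_cancel[OF X0_nonzero])
qed

lemma subst_fps_deriv_x1:
  "Dx1 (subst_fps (F :: 'k::idom fps fps fps))
     = - (X0 * subst_fps (Dy1 F)) + 2 * X0 * X1 * subst_fps (Dy2 F)"
proof -
  have "X1 * Dx1 (subst_fps F)
      = X1 * (- (X0 * subst_fps (Dy1 F)) + 2 * X0 * X1 * subst_fps (Dy2 F))"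
    by (simp add: subst_fps_euler_x1 subst_fps_add subst_fps_mult subst_fps_two subst_fps_Y1
        subst_fps_Y2 algebra_simps)
  then show ?thesis
    by (simp only: mult_left_cancel[OF X1_nonzero])
qed

lemma subst_fps_poisson:
  "subst_fps (poisson_y F G) = poisson_x (subst_fps F) (subst_fps (G :: 'k::idom fps fps fps))"
  by (simp add: poisson_y_def poisson_x_def wedge_def subst_fps_deriv_x0 subst_fps_deriv_x1
      subst_fps_add subst_fps_diff subst_fps_mult subst_fps_two subst_fps_Y0 subst_fps_Y1
      subst_fps_Y2 algebra_simps)

section \<open>The induced Poisson homomorphism on \<open>A\<close>\<close>

definition A_subst :: "'k::comm_ring_1 ps3 set \<Rightarrow> 'k ps2" where
  "A_subst X = subst (SOME a. a \<in> X)"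

lemma subst_A_cls_eq:
  assumes "a \<in> A_cls f"
  shows "subst a = subst f"
proof -
  obtain R where "fps_of_ps3 a = fps_of_ps3 f + R * Q"
    using assms mem_A_cls_iff by blast
  then have "subst_fps (fps_of_ps3 a) = subst_fps (fps_of_ps3 f)"
    by (simp add: subst_fps_add subst_fps_mult subst_fps_casimir)
  then show ?thesis
    by (simp add: subst_eq_subst_fps)
qed

lemma A_subst_cls: "A_subst (A_cls f) = subst f"
  unfolding A_subst_def
  by (rule subst_A_cls_eq, rule someI[of "\<lambda>a. a \<in> A_cls _", OF A_cls_self])

lemma A_subst_ring_hom: "(A_subst :: 'k::comm_ring_1 ps3 set \<Rightarrow> 'k ps2) \<in> ring_hom A_ring PS2"
proof (rule ring_hom_memI)
  fix X Y :: "'k ps3 set" assume "X \<in> carrier A_ring" "Y \<in> carrier A_ring"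
  then obtain f g where X: "X = A_cls f" and Y: "Y = A_cls g"
    by (metis A_ring_carrier_cases)
  have cls_mult: "X \<otimes>\<^bsub>A_ring\<^esub> Y = A_cls (ps3_mult f g)"
    using ring_hom_mult[OF A_cls_ring_hom, of f g] by (simp add: X Y PS3_def)
  have cls_add: "X \<oplus>\<^bsub>A_ring\<^esub> Y = A_cls (\<lambda>m. f m + g m)"
    using ring_hom_add[OF A_cls_ring_hom, of f g] by (simp add: X Y PS3_def)
  show "A_subst (X \<otimes>\<^bsub>A_ring\<^esub> Y) = A_subst X \<otimes>\<^bsub>PS2\<^esub> A_subst Y"
    unfolding cls_mult by (simp add: X Y A_subst_cls subst_mult PS2_def)
  show "A_subst (X \<oplus>\<^bsub>A_ring\<^esub> Y) = A_subst X \<oplus>\<^bsub>PS2\<^esub> A_subst Y"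
    unfolding cls_add by (simp add: X Y A_subst_cls subst_add PS2_def)
next
  have cls_one: "A_cls (\<lambda>m. if m = (0,0,0) then 1 else 0) = \<one>\<^bsub>A_ring\<^esub>"
    using ring_hom_one[OF A_cls_ring_hom] by (simp add: PS3_def)
  show "A_subst \<one>\<^bsub>A_ring\<^esub> = \<one>\<^bsub>PS2\<^esub>"
    unfolding cls_one[symmetric] A_subst_cls subst_one by (simp add: PS2_def)
qed (simp add: PS2_def)

lemma iotaA_eq: "iotaA h = A_cls (ps3_of_fps (fps_const (fps_const h)))"
  unfolding iotaA_def by (rule arg_cong[where f = A_cls]) (auto simp: ps3_of_fps_def)

lemma iotaB_eq: "iotaB h = ps2_of_fps (fps_const h)"
  by (auto simp: iotaB_def ps2_of_fps_def)

lemma A_subst_kx_alg_hom: "is_kx_alg_hom A_subst"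
  unfolding is_kx_alg_hom_def
  by (simp add: A_subst_ring_hom iotaA_eq iotaB_eq A_subst_cls subst_eq_subst_fps subst_fps_const)

lemma A_subst_y0: "A_subst (A_cls y0) = x0"
  and A_subst_y1: "A_subst (A_cls y1) = (\<lambda>m. - ps2_mult x0 x1 m)"
  and A_subst_y2: "A_subst (A_cls y2) = ps2_mult x0 (ps2_mult x1 x1)"
  by (simp_all add: A_subst_cls fps_of_ps2_inject[symmetric] fps_of_ps2_subst fps_of_ps3_variables
      subst_fps_Y0 subst_fps_Y1 subst_fps_Y2 fps_of_ps2_variables fps_of_ps2_uminus fps_of_ps2_mult)

lemma B_homog_iff: "B_homog p f \<longleftrightarrow> (\<forall>j. j \<noteq> p \<longrightarrow> fps_of_ps2 f $ j = 0)"
  by (auto simp: B_homog_def fps_eq_iff)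

lemma A_subst_grading_preserving: "grading_preserving A_subst"
  unfolding grading_preserving_def B_homog_iff
  by (auto simp: A_subst_cls fps_of_ps2_subst fps_of_ps3_variables subst_fps_Y0 subst_fps_Y1
      subst_fps_Y2 X0_def X1_def)

lemma A_subst_poisson: "is_poisson (A_subst :: 'k::idom ps3 set \<Rightarrow> 'k ps2)"
  unfolding is_poisson_def
proof (intro ballI)
  fix X Y :: "'k ps3 set"
  assume "X \<in> carrier A_ring" "Y \<in> carrier A_ring"
  then obtain f g where X: "X = A_cls f" and Y: "Y = A_cls g"
    by (metis A_ring_carrier_cases)
  have "fps_of_ps2 (subst (P3_bracket f g)) = fps_of_ps2 (B_bracket (subst f) (subst g))"
    by (simp add: fps_of_ps2_subst fps_of_ps3_P3_bracket subst_fps_poisson fps_of_ps2_B_bracket)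
  then show "A_subst (A_bracket X Y) = B_bracket (A_subst X) (A_subst Y)"
    by (simp add: X Y A_bracket_cls A_subst_cls fps_of_ps2_inject)
qed

section \<open>Uniqueness\<close>

lemma eq_0_if_X0_power_dvd:
  assumes "\<And>N. X0 ^ N dvd (G :: 'k::comm_ring_1 fps fps)"
  shows "G = 0"
proof (intro fps_ext)
  fix j i
  obtain H where "G = X0 ^ Suc i * H"
    using assms by (blast elim: dvdE)
  then show "G $ j $ i = 0 $ j $ i"
    by (simp add: X0_def fps_X_power_mult_nth del: power_Suc)
qed

lemma fps3_decompose:
  "F = fps_const (fps_const (fps_const (F $ 0 $ 0 $ 0)))
     + Y0 * fps_const (fps_const (fps_shift 1 (F $ 0 $ 0)))
     + Y1 * fps_const (fps_shift 1 (F $ 0)) + Y2 * fps_shift 1 F"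
  by (intro fps_ext) (auto simp: Y0_def Y1_def Y2_def split: nat.splits)

lemma fps3_hom_eqI:
  fixes \<Psi> \<Theta> :: "'k::comm_ring_1 fps fps fps \<Rightarrow> 'k fps fps"
  assumes \<Psi>_add: "\<And>F G. \<Psi> (F + G) = \<Psi> F + \<Psi> G" and \<Psi>_mult: "\<And>F G. \<Psi> (F * G) = \<Psi> F * \<Psi> G"
    and \<Theta>_add: "\<And>F G. \<Theta> (F + G) = \<Theta> F + \<Theta> G" and \<Theta>_mult: "\<And>F G. \<Theta> (F * G) = \<Theta> F * \<Theta> G"
    and const: "\<And>c. \<Psi> (fps_const (fps_const (fps_const c)))
      = \<Theta> (fps_const (fps_const (fps_const c)))"
    and gens: "\<Psi> Y0 = \<Theta> Y0" "\<Psi> Y1 = \<Theta> Y1" "\<Psi> Y2 = \<Theta> Y2"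
    and dvd: "X0 dvd \<Psi> Y0" "X0 dvd \<Psi> Y1" "X0 dvd \<Psi> Y2"
  shows "\<Psi> F = \<Theta> F"
proof -
  have "X0 ^ N dvd \<Psi> F - \<Theta> F" for N F
  proof (induction N arbitrary: F)
    case 0
    show ?case by simp
  next
    case (Suc N)
    define c where "c = fps_const (fps_const (fps_const (F $ 0 $ 0 $ 0)))"
    define A where "A = fps_const (fps_const (fps_shift 1 (F $ 0 $ 0)))"
    define B where "B = fps_const (fps_shift 1 (F $ 0))"
    define C where "C = fps_shift 1 F"
    have F: "F = c + Y0 * A + Y1 * B + Y2 * C"
      unfolding c_def A_def B_def C_def by (rule fps3_decompose)
    have "\<Psi> c = \<Theta> c"
      unfolding c_def by (rule const)
    then have "\<Psi> F - \<Theta> F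
        = \<Psi> Y0 * (\<Psi> A - \<Theta> A) + \<Psi> Y1 * (\<Psi> B - \<Theta> B) + \<Psi> Y2 * (\<Psi> C - \<Theta> C)"
      unfolding F \<Psi>_add \<Psi>_mult \<Theta>_add \<Theta>_mult gens by (simp add: algebra_simps)
    also have "X0 ^ Suc N dvd \<dots>"
      using dvd Suc.IH by (simp add: mult_dvd_mono)
    finally show ?case .
  qed
  then show ?thesis
    using eq_0_if_X0_power_dvd by (metis right_minus_eq)
qed

definition hom_on_fps :: "('k::comm_ring_1 ps3 set \<Rightarrow> 'k ps2) \<Rightarrow> 'k fps fps fps \<Rightarrow> 'k fps fps" where
  "hom_on_fps \<psi> F = fps_of_ps2 (\<psi> (A_cls (ps3_of_fps F)))"

lemma ps3_of_fps_poisson_y: "ps3_of_fps (poisson_y F G) = P3_bracket (ps3_of_fps F) (ps3_of_fps G)"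
  by (simp add: fps_of_ps3_inject[symmetric] fps_of_ps3_P3_bracket)

lemma fps_of_ps2_hom_A_cls: "fps_of_ps2 (\<psi> (A_cls f)) = hom_on_fps \<psi> (fps_of_ps3 f)"
  by (simp add: hom_on_fps_def)

context
  fixes \<psi> :: "'k::comm_ring_1 ps3 set \<Rightarrow> 'k ps2"
  assumes \<psi>: "is_kx_alg_hom \<psi>"
begin

lemma hom_on_fps_mult: "hom_on_fps \<psi> (F * G) = hom_on_fps \<psi> F * hom_on_fps \<psi> G"
proof -
  have "A_cls (ps3_mult (ps3_of_fps F) (ps3_of_fps G))
      = A_cls (ps3_of_fps F) \<otimes>\<^bsub>A_ring\<^esub> A_cls (ps3_of_fps G)"
    using ring_hom_mult[OF A_cls_ring_hom] by (simp add: PS3_def)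
  moreover have "\<psi> \<in> ring_hom A_ring PS2"
    using \<psi> by (simp add: is_kx_alg_hom_def)
  ultimately show ?thesis
    by (simp add: hom_on_fps_def ps3_of_fps_mult ring_hom_mult A_cls_in_carrier PS2_def
        fps_of_ps2_mult)
qed

lemma hom_on_fps_add: "hom_on_fps \<psi> (F + G) = hom_on_fps \<psi> F + hom_on_fps \<psi> G"
proof -
  have "A_cls (\<lambda>m. ps3_of_fps F m + ps3_of_fps G m)
      = A_cls (ps3_of_fps F) \<oplus>\<^bsub>A_ring\<^esub> A_cls (ps3_of_fps G)"
    using ring_hom_add[OF A_cls_ring_hom] by (simp add: PS3_def)
  moreover have "\<psi> \<in> ring_hom A_ring PS2"
    using \<psi> by (simp add: is_kx_alg_hom_def)
  ultimately show ?thesis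
    by (simp add: hom_on_fps_def ps3_of_fps_add ring_hom_add A_cls_in_carrier PS2_def
        fps_of_ps2_add)
qed

lemma hom_on_fps_const: "hom_on_fps \<psi> (fps_const (fps_const h)) = fps_const h"
  using \<psi> by (simp add: is_kx_alg_hom_def hom_on_fps_def iotaA_eq[symmetric] iotaB_eq)

end

lemma hom_on_fps_poisson:
  assumes "is_poisson \<psi>"
  shows "hom_on_fps \<psi> (poisson_y F G) = poisson_x (hom_on_fps \<psi> F) (hom_on_fps \<psi> G)"
proof -
  have "\<psi> (A_bracket (A_cls f) (A_cls g)) = B_bracket (\<psi> (A_cls f)) (\<psi> (A_cls g))" for f g
    using assms A_cls_in_carrier unfolding is_poisson_def by blast
  from arg_cong[where f = fps_of_ps2, OF this[of "ps3_of_fps F" "ps3_of_fps G"]] show ?thesis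
    by (simp add: A_bracket_cls fps_of_ps2_B_bracket ps3_of_fps_poisson_y hom_on_fps_def)
qed

lemma fps_of_ps2_homogeneous:
  assumes "B_homog p f"
  shows "fps_of_ps2 f = X1 ^ p * fps_const (fps_of_ps2 f $ p)"
  using assms by (intro fps_ext) (auto simp: B_homog_def X1_def fps_X_power_mult_nth)

lemma poisson_y_generators: "poisson_y Y0 Y1 = Y0" "poisson_y Y0 Y2 = 2 * Y1"
  by (simp_all add: poisson_y_def wedge_def partials_variables)

lemma poisson_x_X0: "poisson_x X0 G = - Dx1 G"
  by (simp add: poisson_x_def wedge_def partials_variables)

lemma graded_poisson_hom_generators:
  fixes \<psi> :: "'k::field_char_0 ps3 set \<Rightarrow> 'k ps2"
  assumes hom: "is_kx_alg_hom \<psi>" and graded: "grading_preserving \<psi>" and poisson: "is_poisson \<psi>"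
  shows "hom_on_fps \<psi> Y0 = X0" "hom_on_fps \<psi> Y1 = - (X0 * X1)" "hom_on_fps \<psi> Y2 = X0 * (X1 * X1)"
proof -
  show Y0: "hom_on_fps \<psi> Y0 = X0"
    using hom_on_fps_const[OF hom, of fps_X] by (simp add: Y0_def X0_def)
  have "B_homog 1 (\<psi> (A_cls y1))" "B_homog 2 (\<psi> (A_cls y2))"
    using graded by (simp_all add: grading_preserving_def)
  then obtain g h where g: "hom_on_fps \<psi> Y1 = X1 * fps_const g"
    and h: "hom_on_fps \<psi> Y2 = X1 * X1 * fps_const h"
    by (metis fps_of_ps2_homogeneous fps_of_ps2_hom_A_cls fps_of_ps3_variables power_one_right
        power2_eq_square)
  have X0_eq: "X0 = - fps_const g"
    using hom_on_fps_poisson[OF poisson, of Y0 Y1]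
    by (simp add: poisson_y_generators Y0 g poisson_x_X0 X1_def)
  show Y1: "hom_on_fps \<psi> Y1 = - (X0 * X1)"
    by (simp only: g X0_eq mult_minus_left mult_minus_right minus_minus mult.commute)
  have "X1 * (2 * X0) = X1 * (2 * fps_const h)"
    using hom_on_fps_poisson[OF poisson, of Y0 Y2]
    unfolding poisson_y_generators mult_2 hom_on_fps_add[OF hom] Y0 Y1 h poisson_x_X0
    by (simp add: X1_def algebra_simps)
  then have "2 * X0 = 2 * fps_const h"
    by (simp only: mult_left_cancel[OF X1_nonzero])
  then have "X0 = fps_const h"
    by simp
  then show "hom_on_fps \<psi> Y2 = X0 * (X1 * X1)"
    by (simp add: h)
qed

lemma A_subst_unique:
  fixes \<psi> :: "'k::field_char_0 ps3 set \<Rightarrow> 'k ps2"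
  assumes hom: "is_kx_alg_hom \<psi>" and "grading_preserving \<psi>" "is_poisson \<psi>"
    and X: "X \<in> carrier A_ring"
  shows "\<psi> X = A_subst X"
proof -
  obtain f where f: "X = A_cls f"
    using X by (rule A_ring_carrier_cases)
  note generators = graded_poisson_hom_generators[OF assms(1-3)]
  have "hom_on_fps \<psi> F = subst_fps F" for F
    by (rule fps3_hom_eqI[OF hom_on_fps_add[OF hom] hom_on_fps_mult[OF hom]
          subst_fps_add subst_fps_mult])
      (simp_all add: hom_on_fps_const[OF hom] subst_fps_const generators subst_fps_Y0 subst_fps_Y1
        subst_fps_Y2)
  then show ?thesis
    by (simp add: f fps_of_ps2_inject[symmetric] fps_of_ps2_hom_A_cls A_subst_cls fps_of_ps2_subst)
qed

theorem theorem3: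
  shows "\<exists>\<phi> :: 'k::field_char_0 ps3 set \<Rightarrow> 'k ps2.
           is_kx_alg_hom \<phi> \<and> grading_preserving \<phi> \<and> is_poisson \<phi>
         \<and> \<phi> (A_cls y0) = x0
         \<and> \<phi> (A_cls y1) = (\<lambda>m. - ps2_mult x0 x1 m)
         \<and> \<phi> (A_cls y2) = ps2_mult x0 (ps2_mult x1 x1)
         \<and> (\<forall>\<psi>. is_kx_alg_hom \<psi> \<and> grading_preserving \<psi> \<and> is_poisson \<psi>
                \<longrightarrow> (\<forall>X\<in>carrier A_ring. \<psi> X = \<phi> X))"
  using A_subst_kx_alg_hom A_subst_grading_preserving A_subst_poisson A_subst_y0 A_subst_y1
    A_subst_y2 A_subst_unique
  by blast

end
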